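(* Let $K\subseteq K'\subseteq\mathbb{R}^n$ be convex sets. Suppose the inequality $\alpha^\mathsf{T} x\le\beta$ is valid for $K$, is not valid for $K'$, and is exposed at infinity by a sequence $(x_k)_k\subseteq\mathbb{R}^n$ with respect to $K$. Then there exists $k$ with $x_k\in\operatorname{int}(K')$.
   Context: An inequality $\alpha^\mathsf{T} x\le\beta$ (written $(\alpha,\beta)$) is valid for a set $C$ if it holds on $C$; it is non-trivial if $\alpha\neq0$. A point $x_0$ exposes a valid inequality $(\alpha,\beta)$ with respect to a convex set $C$ if $\alpha^\mathsf{T} x_0=\beta$ and for every non-trivial valid inequality $\gamma^\mathsf{T} x\le\delta$ for $C$ with $\gamma^\mathsf{T} x_0=\delta$ there is $\mu>0$ with $\gamma=\mu\alpha$ and $\delta=\mu\beta$. For a convex set $C$ with recession cone $\operatorname{rec}(C)$ and a valid inequality $\alpha^\mathsf{T} x\le\beta$, a sequence $(x_k)_k$ exposes $(\alpha,\beta)$ at infinity with respect to $C$ if: $\|x_k\|\to\infty$; $x_k/\|x_k\|\to d\in\operatorname{rec}(C)$; $d$ exposes $\alpha^\mathsf{T} x\le0$ with respect to $\operatorname{rec}(C)$; and there exists $y$ with $\alpha^\mathsf{T} y=\beta$ such that $\operatorname{dist}(x_k,y+\langle d\rangle)\to0$, where $\langle d\rangle$ is the line spanned by $d$. *)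

theory Defs
  imports "HOL-Analysis.Analysis"
begin

definition valid_ineq :: "'a::euclidean_space set \<Rightarrow> 'a \<Rightarrow> real \<Rightarrow> bool" where
  "valid_ineq C \<alpha> \<beta> \<longleftrightarrow> (\<forall>x\<in>C. \<alpha> \<bullet> x \<le> \<beta>)"

definition rec_cone :: "'a::euclidean_space set \<Rightarrow> 'a set" where
  "rec_cone C = {d. \<forall>x\<in>C. \<forall>t::real. t \<ge> 0 \<longrightarrow> x + t *\<^sub>R d \<in> C}"

definition exposes :: "'a::euclidean_space \<Rightarrow> 'a set \<Rightarrow> 'a \<Rightarrow> real \<Rightarrow> bool" where
  "exposes x0 C \<alpha> \<beta> \<longleftrightarrow> valid_ineq C \<alpha> \<beta> \<and> \<alpha> \<bullet> x0 = \<beta> \<and>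
     (\<forall>\<gamma> \<delta>. \<gamma> \<noteq> 0 \<and> valid_ineq C \<gamma> \<delta> \<and> \<gamma> \<bullet> x0 = \<delta> \<longrightarrow>
        (\<exists>\<mu>>0. \<gamma> = \<mu> *\<^sub>R \<alpha> \<and> \<delta> = \<mu> * \<beta>))"

definition exposes_at_infinity :: "(nat \<Rightarrow> 'a::euclidean_space) \<Rightarrow> 'a set \<Rightarrow> 'a \<Rightarrow> real \<Rightarrow> bool" where
  "exposes_at_infinity x C \<alpha> \<beta> \<longleftrightarrow>
     filterlim (\<lambda>k. norm (x k)) at_top sequentially \<and>
     (\<exists>d. ((\<lambda>k. x k /\<^sub>R norm (x k)) \<longlonglongrightarrow> d) \<and> d \<in> rec_cone C \<and>
          exposes d (rec_cone C) \<alpha> 0 \<and>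
          (\<exists>y. \<alpha> \<bullet> y = \<beta> \<and>
               ((\<lambda>k. infdist (x k) ((\<lambda>t. y + t *\<^sub>R d) ` UNIV)) \<longlonglongrightarrow> 0)))"

end

theory Submission
  imports Defs
begin

text \<open>If no \<open>x\<^sub>k\<close> lies in \<open>int K'\<close>, each \<open>x\<^sub>k\<close> has a unit supporting normal \<open>g\<^sub>k\<close> of \<open>K'\<close>;
  let \<open>\<gamma>\<close> be the limit of a subsequence. The rays \<open>w + s e\<close> (\<open>w \<in> K\<close>, \<open>e \<in> rec K\<close>) lie in \<open>K'\<close>, so
  \<open>g\<^sub>k \<bullet> e \<le> 0\<close> and hence \<open>\<gamma> \<bullet> e \<le> 0\<close>; dividing \<open>g\<^sub>k \<bullet> w \<le> g\<^sub>k \<bullet> x\<^sub>k\<close> by \<open>\<parallel>x\<^sub>k\<parallel>\<close> gives \<open>\<gamma> \<bullet> d \<ge> 0\<close>.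
  Thus \<open>\<gamma> \<bullet> x \<le> 0\<close> is valid for \<open>rec K\<close> and tight at \<open>d\<close>, so \<open>\<gamma>\<close> is a positive multiple of \<open>\<alpha>\<close>.
  Finally \<open>x\<^sub>k\<close> is within \<open>o(1)\<close> of a point \<open>y + t\<^sub>k d\<close> with \<open>t\<^sub>k \<ge> 0\<close>, and \<open>g\<^sub>k \<bullet> d \<le> 0\<close>, so
  \<open>g\<^sub>k \<bullet> z \<le> g\<^sub>k \<bullet> x\<^sub>k \<le> g\<^sub>k \<bullet> y + o(1)\<close> for \<open>z \<in> K'\<close>; in the limit \<open>\<alpha> \<bullet> z \<le> \<alpha> \<bullet> y = \<beta>\<close>, i.e. the
  inequality is valid for \<open>K'\<close>.\<close>

lemma convex_supporting_unit_normal: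
  fixes S :: "'a::euclidean_space set"
  assumes "convex S" "x \<notin> interior S"
  obtains a where "norm a = 1" "\<And>w. w \<in> S \<Longrightarrow> a \<bullet> w \<le> a \<bullet> x"
proof -
  have "\<exists>a. a \<noteq> 0 \<and> (\<forall>w\<in>S. a \<bullet> w \<le> a \<bullet> x)"
  proof (cases "interior S = {}")
    case True
    then obtain a b where "a \<noteq> 0" "S \<subseteq> {w. a \<bullet> w = b}"
      using empty_interior_subset_hyperplane[OF \<open>convex S\<close>] by metis
    then show ?thesis
      by (cases "b \<le> a \<bullet> x") (force intro: exI[of _ a], force intro: exI[of _ "-a"])
  next
    case False
    obtain a b where "a \<noteq> 0" "a \<bullet> x \<le> b" and ge: "\<And>w. w \<in> interior S \<Longrightarrow> b \<le> a \<bullet> w"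
      using separating_hyperplane_sets[of "{x}" "interior S"] False assms
        convex_interior[OF \<open>convex S\<close>] by auto
    have "interior S \<subseteq> {w. (-a) \<bullet> w \<le> (-a) \<bullet> x}"
      using ge \<open>a \<bullet> x \<le> b\<close> by force
    then have "closure (interior S) \<subseteq> {w. (-a) \<bullet> w \<le> (-a) \<bullet> x}"
      by (rule closure_minimal) (rule closed_halfspace_le)
    then have "S \<subseteq> {w. (-a) \<bullet> w \<le> (-a) \<bullet> x}"
      using convex_closure_interior[OF \<open>convex S\<close> False] closure_subset by blast
    then show ?thesis
      using \<open>a \<noteq> 0\<close> by (intro exI[of _ "-a"]) auto
  qed
  then obtain a where "a \<noteq> 0" "\<And>w. w \<in> S \<Longrightarrow> a \<bullet> w \<le> a \<bullet> x"
    by blast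
  then show ?thesis
    by (intro that[of "a /\<^sub>R norm a"]) (auto simp: divide_right_mono)
qed

lemma inner_nonpos_if_ray_below:
  fixes a w e :: "'a::real_inner"
  assumes "\<And>s. 0 \<le> s \<Longrightarrow> a \<bullet> (w + s *\<^sub>R e) \<le> b"
  shows "a \<bullet> e \<le> 0"
proof (rule ccontr)
  assume "\<not> a \<bullet> e \<le> 0"
  define s where "s = (\<bar>b - a \<bullet> w\<bar> + 1) / (a \<bullet> e)"
  have "0 \<le> s" "a \<bullet> (w + s *\<^sub>R e) = a \<bullet> w + \<bar>b - a \<bullet> w\<bar> + 1"
    using \<open>\<not> a \<bullet> e \<le> 0\<close> by (auto simp: s_def inner_add_right)
  then show False
    using assms[of s] by linarith
qed

lemma valid_ineq_UNIV_iff: "valid_ineq UNIV \<alpha> \<beta> \<longleftrightarrow> \<alpha> = 0 \<and> 0 \<le> \<beta>"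
proof
  assume valid: "valid_ineq UNIV \<alpha> \<beta>"
  then have "\<alpha> \<bullet> \<alpha> \<le> 0"
    by (metis inner_nonpos_if_ray_below UNIV_I valid_ineq_def)
  moreover have "\<alpha> \<bullet> 0 \<le> \<beta>"
    using valid unfolding valid_ineq_def by blast
  ultimately show "\<alpha> = 0 \<and> 0 \<le> \<beta>"
    by (metis inner_eq_zero_iff inner_ge_zero order_antisym)
qed (simp add: valid_ineq_def)

lemma rec_cone_empty [simp]: "rec_cone {} = UNIV"
  by (simp add: rec_cone_def)

lemma norm_direction_limit:
  fixes x :: "nat \<Rightarrow> 'a::real_normed_vector"
  assumes "filterlim (\<lambda>k. norm (x k)) at_top sequentially"
    and "(\<lambda>k. x k /\<^sub>R norm (x k)) \<longlonglongrightarrow> d"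
  shows "norm d = 1"
proof -
  have "\<forall>\<^sub>F k in sequentially. 0 < norm (x k)"
    using assms(1) by (rule filterlim_at_top_dense[THEN iffD1, rule_format])
  then have "\<forall>\<^sub>F k in sequentially. norm (x k /\<^sub>R norm (x k)) = 1"
    by eventually_elim simp
  then have "(\<lambda>k. norm (x k /\<^sub>R norm (x k))) \<longlonglongrightarrow> 1"
    by (rule tendsto_eventually[OF eventually_mono]) auto
  then show ?thesis
    using tendsto_norm[OF assms(2)] LIMSEQ_unique by metis
qed

lemma exposes_at_infinity_subseq:
  assumes "exposes_at_infinity x C \<alpha> \<beta>" "strict_mono r"
  shows "exposes_at_infinity (x \<circ> r) C \<alpha> \<beta>"
  using assms filterlim_compose[OF _ filterlim_subseq[OF \<open>strict_mono r\<close>]]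
    LIMSEQ_subseq_LIMSEQ[OF _ \<open>strict_mono r\<close>]
  unfolding exposes_at_infinity_def o_def by blast

lemma closed_line: "closed (range (\<lambda>t. y + t *\<^sub>R d :: 'a::euclidean_space))"
proof -
  have "range (\<lambda>t. y + t *\<^sub>R d) = (+) y ` span {d}"
    by (auto simp: span_singleton)
  then show ?thesis
    by (simp add: closed_translation)
qed

lemma eventually_line_parameter_nonneg:
  fixes x :: "nat \<Rightarrow> 'a::real_inner"
  assumes nx: "filterlim (\<lambda>k. norm (x k)) at_top sequentially"
    and dir: "(\<lambda>k. x k /\<^sub>R norm (x k)) \<longlonglongrightarrow> d"
    and near: "(\<lambda>k. dist (x k) (y + t k *\<^sub>R d)) \<longlonglongrightarrow> 0"
  shows "\<forall>\<^sub>F k in sequentially. 0 \<le> t k"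
proof -
  have "norm d = 1"
    using nx dir by (rule norm_direction_limit)
  then have "d \<bullet> d = 1"
    by (simp add: dot_square_norm)
  have rescale: "d \<bullet> (v /\<^sub>R norm v) * norm v = d \<bullet> v" for v :: 'a
    by (cases "v = 0") auto
  have ahead: "filterlim (\<lambda>k. d \<bullet> x k) at_top sequentially"
    using filterlim_tendsto_pos_mult_at_top[OF tendsto_inner[OF tendsto_const[of d] dir] _ nx]
    unfolding rescale \<open>d \<bullet> d = 1\<close> by simp
  have offset: "(\<lambda>k. d \<bullet> (y + t k *\<^sub>R d - x k)) \<longlonglongrightarrow> 0"
  proof (rule Lim_null_comparison[OF always_eventually near], intro allI)
    fix k
    show "norm (d \<bullet> (y + t k *\<^sub>R d - x k)) \<le> dist (x k) (y + t k *\<^sub>R d)"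
      using Cauchy_Schwarz_ineq2[of d "y + t k *\<^sub>R d - x k"] \<open>norm d = 1\<close>
      by (simp add: dist_norm norm_minus_commute)
  qed
  have "filterlim (\<lambda>k. (d \<bullet> (y + t k *\<^sub>R d - x k) - d \<bullet> y) + d \<bullet> x k) at_top sequentially"
    by (rule filterlim_tendsto_add_at_top[OF tendsto_diff[OF offset tendsto_const] ahead])
  then have "filterlim t at_top sequentially"
    using \<open>d \<bullet> d = 1\<close> by (simp add: inner_diff_right inner_add_right)
  then show ?thesis
    by (simp add: filterlim_at_top)
qed

lemma limit_normal_direction_nonneg:
  fixes x g :: "nat \<Rightarrow> 'a::euclidean_space"
  assumes nx: "filterlim (\<lambda>k. norm (x k)) at_top sequentially"
    and dir: "(\<lambda>k. x k /\<^sub>R norm (x k)) \<longlonglongrightarrow> d"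
    and supp: "\<And>k. valid_ineq C (g k) (g k \<bullet> x k)"
    and lim: "g \<longlonglongrightarrow> \<gamma>"
    and "w \<in> C"
  shows "0 \<le> \<gamma> \<bullet> d"
proof -
  have "g k \<bullet> w * inverse (norm (x k)) \<le> g k \<bullet> (x k /\<^sub>R norm (x k))" for k
    using supp[of k] \<open>w \<in> C\<close> unfolding valid_ineq_def
    by (simp add: mult.commute mult_left_mono)
  moreover have "(\<lambda>k. g k \<bullet> w * inverse (norm (x k))) \<longlonglongrightarrow> \<gamma> \<bullet> w * 0"
    by (intro tendsto_intros lim tendsto_inverse_0_at_top nx)
  moreover have "(\<lambda>k. g k \<bullet> (x k /\<^sub>R norm (x k))) \<longlonglongrightarrow> \<gamma> \<bullet> d"
    by (intro tendsto_intros lim dir)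
  ultimately show ?thesis
    using LIMSEQ_le by fastforce
qed

lemma limit_normal_le_at_line_base:
  fixes x g :: "nat \<Rightarrow> 'a::euclidean_space"
  assumes nx: "filterlim (\<lambda>k. norm (x k)) at_top sequentially"
    and dir: "(\<lambda>k. x k /\<^sub>R norm (x k)) \<longlonglongrightarrow> d"
    and near: "(\<lambda>k. infdist (x k) (range (\<lambda>t. y + t *\<^sub>R d))) \<longlonglongrightarrow> 0"
    and unit: "\<And>k. norm (g k) \<le> 1"
    and ray: "\<And>k. g k \<bullet> d \<le> 0"
    and supp: "\<And>k. valid_ineq C (g k) (g k \<bullet> x k)"
    and lim: "g \<longlonglongrightarrow> \<gamma>"
    and "z \<in> C"
  shows "\<gamma> \<bullet> z \<le> \<gamma> \<bullet> y"
proof -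
  let ?L = "range (\<lambda>t. y + t *\<^sub>R d)"
  have "\<exists>t. infdist (x k) ?L = dist (x k) (y + t *\<^sub>R d)" for k
    using infdist_attains_inf[OF closed_line, of y d "x k"] by auto
  then obtain t where t: "\<And>k. infdist (x k) ?L = dist (x k) (y + t k *\<^sub>R d)"
    by metis
  have inner_le_norm: "g k \<bullet> v \<le> norm v" for k v
    using norm_cauchy_schwarz[of "g k" v] mult_right_mono[OF unit[of k] norm_ge_zero[of v]] by simp
  have "\<forall>\<^sub>F k in sequentially. 0 \<le> t k"
    using near by (intro eventually_line_parameter_nonneg[OF nx dir]) (simp add: t)
  then have "\<forall>\<^sub>F k in sequentially. g k \<bullet> z \<le> g k \<bullet> y + infdist (x k) ?L"
  proof eventually_elim
    case (elim k)
    have "g k \<bullet> z \<le> g k \<bullet> x k"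
      using supp[of k] \<open>z \<in> C\<close> unfolding valid_ineq_def by blast
    also have "\<dots> = g k \<bullet> y + t k * (g k \<bullet> d) + g k \<bullet> (x k - (y + t k *\<^sub>R d))"
      by (simp add: inner_diff_right inner_add_right)
    also have "\<dots> \<le> g k \<bullet> y + norm (x k - (y + t k *\<^sub>R d))"
      using mult_nonneg_nonpos[OF elim ray[of k]] inner_le_norm[of k "x k - (y + t k *\<^sub>R d)"]
      by linarith
    also have "\<dots> = g k \<bullet> y + infdist (x k) ?L"
      by (simp add: t dist_norm)
    finally show ?case .
  qed
  moreover have "(\<lambda>k. g k \<bullet> y + infdist (x k) ?L) \<longlonglongrightarrow> \<gamma> \<bullet> y + 0"
    by (intro tendsto_intros lim near)
  moreover have "(\<lambda>k. g k \<bullet> z) \<longlonglongrightarrow> \<gamma> \<bullet> z"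
    by (intro tendsto_intros lim)
  ultimately show ?thesis
    using tendsto_le[OF sequentially_bot] by fastforce
qed

lemma valid_ineq_if_limit_of_supporting_normals:
  fixes x g :: "nat \<Rightarrow> 'a::euclidean_space"
  assumes "K \<subseteq> K'"
    and expo: "exposes_at_infinity x K \<alpha> \<beta>"
    and unit: "\<And>k. norm (g k) = 1"
    and supp: "\<And>k. valid_ineq K' (g k) (g k \<bullet> x k)"
    and lim: "g \<longlonglongrightarrow> \<gamma>"
  shows "valid_ineq K' \<alpha> \<beta>"
proof -
  obtain d y where nx: "filterlim (\<lambda>k. norm (x k)) at_top sequentially"
    and dir: "(\<lambda>k. x k /\<^sub>R norm (x k)) \<longlonglongrightarrow> d"
    and "d \<in> rec_cone K" and exposed: "exposes d (rec_cone K) \<alpha> 0"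
    and "\<alpha> \<bullet> y = \<beta>"
    and near: "(\<lambda>k. infdist (x k) (range (\<lambda>t. y + t *\<^sub>R d))) \<longlonglongrightarrow> 0"
    using expo unfolding exposes_at_infinity_def by blast
  show ?thesis
  proof (cases "K = {}")
    case True
    then have "\<alpha> = 0"
      using exposed by (simp add: exposes_def valid_ineq_UNIV_iff)
    then show ?thesis
      using \<open>\<alpha> \<bullet> y = \<beta>\<close> by (simp add: valid_ineq_def)
  next
    case False
    then obtain w where "w \<in> K"
      by blast
    have normal_rec_cone: "g k \<bullet> e \<le> 0" if "e \<in> rec_cone K" for k e
    proof (rule inner_nonpos_if_ray_below)
      fix s :: real
      assume "0 \<le> s"
      then have "w + s *\<^sub>R e \<in> K'"
        using that \<open>w \<in> K\<close> \<open>K \<subseteq> K'\<close> unfolding rec_cone_def by blast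
      then show "g k \<bullet> (w + s *\<^sub>R e) \<le> g k \<bullet> x k"
        using supp unfolding valid_ineq_def by blast
    qed
    have "valid_ineq (rec_cone K) \<gamma> 0"
      unfolding valid_ineq_def
      using normal_rec_cone by (blast intro: LIMSEQ_le_const2[OF tendsto_inner[OF lim tendsto_const]])
    moreover have "\<gamma> \<bullet> d = 0"
    proof (rule antisym)
      show "\<gamma> \<bullet> d \<le> 0"
        using calculation \<open>d \<in> rec_cone K\<close> unfolding valid_ineq_def by blast
      show "0 \<le> \<gamma> \<bullet> d"
        using \<open>w \<in> K\<close> \<open>K \<subseteq> K'\<close> by (intro limit_normal_direction_nonneg[OF nx dir supp lim]) blast
    qed
    moreover have "\<gamma> \<noteq> 0"
    proof -
      have "(\<lambda>k. 1) \<longlonglongrightarrow> norm \<gamma>"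
        using tendsto_norm[OF lim] by (simp add: unit)
      then have "norm \<gamma> = 1"
        by (simp add: LIMSEQ_const_iff)
      then show ?thesis
        by auto
    qed
    ultimately obtain \<mu> where "0 < \<mu>" "\<gamma> = \<mu> *\<^sub>R \<alpha>"
      using exposed unfolding exposes_def by blast
    show ?thesis
      unfolding valid_ineq_def
    proof
      fix z
      assume "z \<in> K'"
      have "\<gamma> \<bullet> z \<le> \<gamma> \<bullet> y"
        by (rule limit_normal_le_at_line_base[OF nx dir near _
              normal_rec_cone[OF \<open>d \<in> rec_cone K\<close>] supp lim \<open>z \<in> K'\<close>]) (simp add: unit)
      then have "\<mu> * (\<alpha> \<bullet> z) \<le> \<mu> * (\<alpha> \<bullet> y)"
        by (simp add: \<open>\<gamma> = \<mu> *\<^sub>R \<alpha>\<close>)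
      then show "\<alpha> \<bullet> z \<le> \<beta>"
        using \<open>0 < \<mu>\<close> \<open>\<alpha> \<bullet> y = \<beta>\<close> by simp
    qed
  qed
qed

theorem theorem4:
  fixes K K' :: "'a::euclidean_space set" and \<alpha> :: 'a and \<beta> :: real
    and x :: "nat \<Rightarrow> 'a"
  assumes "convex K" and "convex K'" and "K \<subseteq> K'"
    and "valid_ineq K \<alpha> \<beta>"
    and "\<not> valid_ineq K' \<alpha> \<beta>"
    and "exposes_at_infinity x K \<alpha> \<beta>"
  shows "\<exists>k. x k \<in> interior K'"
proof (rule ccontr)
  assume "\<nexists>k. x k \<in> interior K'"
  have "\<exists>a. norm a = 1 \<and> valid_ineq K' a (a \<bullet> x k)" for k
  proof -
    obtain a where "norm a = 1" "\<And>w. w \<in> K' \<Longrightarrow> a \<bullet> w \<le> a \<bullet> x k"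
      using convex_supporting_unit_normal[OF \<open>convex K'\<close>] \<open>\<nexists>k. x k \<in> interior K'\<close> by blast
    then show ?thesis
      unfolding valid_ineq_def by blast
  qed
  then obtain g where unit: "\<And>k. norm (g k) = 1" and supp: "\<And>k. valid_ineq K' (g k) (g k \<bullet> x k)"
    by metis
  then have "bounded (range g)"
    by (auto simp: bounded_iff)
  then obtain r \<gamma> where "strict_mono r" and lim: "(g \<circ> r) \<longlonglongrightarrow> \<gamma>"
    using bounded_imp_convergent_subsequence by blast
  have "valid_ineq K' \<alpha> \<beta>"
  proof (rule valid_ineq_if_limit_of_supporting_normals[OF \<open>K \<subseteq> K'\<close> _ _ _ lim])
    show "exposes_at_infinity (x \<circ> r) K \<alpha> \<beta>"
      using \<open>exposes_at_infinity x K \<alpha> \<beta>\<close> \<open>strict_mono r\<close> by (rule exposes_at_infinity_subseq)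
  qed (simp_all add: unit supp)
  with \<open>\<not> valid_ineq K' \<alpha> \<beta>\<close> show False ..
qed

end
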